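(* Let $p\ge0$, $q\ge1$, $\mathbf{k}=(k_1,\dots,k_r)$ with $k_i\ge1$, and let $\tilde V$ denote $\tilde V_{\mathbf{k}}(\mathbb{R}^{p,q})$ if $q\ge2$, or a fixed component $\tilde V_{\mathbf{k}}(\mathbb{R}^{p,1})_\Sigma$ if $q=1$. Let $\tilde V^\infty=\tilde V\cup\{\infty\}$ be its one-point compactification. For every $\lambda\in\mathbb{P}(\mathbf{k})$, the subspace $F_\lambda\subseteq\tilde V^\infty$ consisting of $\infty$ together with all $Z\in\tilde V$ with $\omega(Q^Z)\ge\lambda$ is closed in $\tilde V^\infty$.
   Context: $d=p+q$; points of $\mathbb{R}^d$ are written $(\zeta,t)\in\mathbb{R}^{d-1}\times\mathbb{R}$ with projections $\mathrm{pr}_\zeta,\mathrm{pr}_t$; $\mathrm{pr}_1$ is the projection to the first $p$ coordinates. $\tilde V_{\mathbf{k}}(\mathbb{R}^{p,q})\subseteq\prod_i(\mathbb{R}^d)^{k_i}$ consists of tuples $Z=(z_i^j)$ of pairwise distinct points with $\mathrm{pr}_1(z_i^1)=\dots=\mathrm{pr}_1(z_i^{k_i})$ for each $i$; for $q=1$ and $\Sigma=(\sigma_i)\in\prod\mathfrak{S}_{k_i}$, $\tilde V_{\mathbf{k}}(\mathbb{R}^{p,1})_\Sigma$ is the subset where $\mathrm{pr}_t(z_i^{\sigma_i(j)})<\mathrm{pr}_t(z_i^{\sigma_i(j+1)})$ for all $i,j$. Table $T_{\mathbf{k}}=\{(i,j):1\le i\le r,1\le j\le k_i\}$ with lexicographic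 order $<$. A ray partition $Q$ of type $\mathbf{k}$: partition of $T_{\mathbf{k}}$ into nonempty $Q_1,\dots,Q_l$ with total orders $\prec_\beta$, such that $\min(Q_1,<)<\dots<\min(Q_l,<)$ and $\min(Q_\beta,\prec_\beta)=\min(Q_\beta,<)$. It is witnessed by $Z$ if all $z_i^j$, $(i,j)\in Q_\beta$, have the same $\mathrm{pr}_\zeta$, and $(i,j)\prec_\beta(i',j')$ implies $\mathrm{pr}_t(z_i^j)<\mathrm{pr}_t(z_{i'}^{j'})$. Weight $\omega(Q)=(|Q_1|,\dots,|Q_l|)\in\mathbb{P}(\mathbf{k})$, the set of sequences of positive integers summing to $|\mathbf{k}|=\sum k_i$, ordered lexicographically after padding with zeros. For each $Z\in\tilde V$, $Q^Z$ denotes the unique ray partition witnessed by $Z$ of maximal weight among those witnessed by $Z$ (its existence and uniqueness is known). *)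

theory Defs
  imports "HOL-Analysis.Analysis" "HOL-Combinatorics.Permutations"
begin

text \<open>A point of R^d is a function nat => real; its coordinates are indexed by 0,...,d-1
  (all other values are required to be 0 on configurations).
  pr_1 = coordinates 0..<p, pr_zeta = coordinates 0..<d-1, pr_t = coordinate d-1.
  The multi-index k = (k_1,...,k_r) is given by r and k :: nat => nat (k i for 1 <= i <= r).\<close>

type_synonym point = "nat \<Rightarrow> real"
type_synonym config = "nat \<times> nat \<Rightarrow> point"

definition table :: "nat \<Rightarrow> (nat \<Rightarrow> nat) \<Rightarrow> (nat \<times> nat) set" where
  "table r k = {(i, j). 1 \<le> i \<and> i \<le> r \<and> 1 \<le> j \<and> j \<le> k i}"

definition total_size :: "nat \<Rightarrow> (nat \<Rightarrow> nat) \<Rightarrow> nat" where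
  "total_size r k = (\<Sum>i = 1..r. k i)"

definition pr_t :: "nat \<Rightarrow> point \<Rightarrow> real" where
  "pr_t d x = x (d - 1)"

definition same_zeta :: "nat \<Rightarrow> point \<Rightarrow> point \<Rightarrow> bool" where
  "same_zeta d x y \<longleftrightarrow> (\<forall>c < d - 1. x c = y c)"

definition same_pr1 :: "nat \<Rightarrow> point \<Rightarrow> point \<Rightarrow> bool" where
  "same_pr1 p x y \<longleftrightarrow> (\<forall>c < p. x c = y c)"

text \<open>Ambient space prod_i (R^d)^{k_i}, realised inside the product topology on
  configurations: all coordinates outside the table / outside 0..<d vanish.\<close>
definition ambient_top :: "config topology" where
  "ambient_top = product_topology (\<lambda>_. powertop_real UNIV) UNIV"

definition ambient_set :: "nat \<Rightarrow> nat \<Rightarrow> (nat \<Rightarrow> nat) \<Rightarrow> config set" where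
  "ambient_set d r k = {Z. \<forall>a c. (a \<notin> table r k \<or> d \<le> c) \<longrightarrow> Z a c = 0}"

definition Vtilde :: "nat \<Rightarrow> nat \<Rightarrow> nat \<Rightarrow> (nat \<Rightarrow> nat) \<Rightarrow> config set" where
  "Vtilde p q r k = {Z \<in> ambient_set (p + q) r k.
      (\<forall>a \<in> table r k. \<forall>b \<in> table r k. a \<noteq> b \<longrightarrow> Z a \<noteq> Z b) \<and>
      (\<forall>i j j'. (i, j) \<in> table r k \<and> (i, j') \<in> table r k \<longrightarrow> same_pr1 p (Z (i, j)) (Z (i, j')))}"

text \<open>The component tilde V_k(R^{p,1})_Sigma, Sigma = (sigma_i), sigma_i a permutation of {1..k_i}.\<close>
definition Vtilde_comp :: "nat \<Rightarrow> nat \<Rightarrow> (nat \<Rightarrow> nat) \<Rightarrow> (nat \<Rightarrow> nat \<Rightarrow> nat) \<Rightarrow> config set" where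
  "Vtilde_comp p r k \<sigma> = {Z \<in> Vtilde p 1 r k.
      \<forall>i j. 1 \<le> i \<and> i \<le> r \<and> 1 \<le> j \<and> j < k i \<longrightarrow>
        pr_t (p + 1) (Z (i, \<sigma> i j)) < pr_t (p + 1) (Z (i, \<sigma> i (j + 1)))}"

definition Vspace :: "nat \<Rightarrow> nat \<Rightarrow> nat \<Rightarrow> (nat \<Rightarrow> nat) \<Rightarrow> (nat \<Rightarrow> nat \<Rightarrow> nat) \<Rightarrow> config set" where
  "Vspace p q r k \<sigma> = (if q = 1 then Vtilde_comp p r k \<sigma> else Vtilde p q r k)"

definition lexless :: "nat \<times> nat \<Rightarrow> nat \<times> nat \<Rightarrow> bool" where
  "lexless a b \<longleftrightarrow> fst a < fst b \<or> (fst a = fst b \<and> snd a < snd b)"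

text \<open>A ray partition of type k: a list of blocks Q_1,...,Q_l, each block given as a
  list listing its elements in the order \<prec>_beta (a total order on a finite set is the same
  as a duplicate-free enumeration).\<close>
definition ray_partition :: "nat \<Rightarrow> (nat \<Rightarrow> nat) \<Rightarrow> (nat \<times> nat) list list \<Rightarrow> bool" where
  "ray_partition r k Q \<longleftrightarrow>
     distinct (concat Q) \<and> set (concat Q) = table r k \<and>
     (\<forall>B \<in> set Q. B \<noteq> []) \<and>
     (\<forall>B \<in> set Q. \<forall>a \<in> set B. a \<noteq> hd B \<longrightarrow> lexless (hd B) a) \<and>
     sorted_wrt lexless (map hd Q)"

definition witnessed :: "nat \<Rightarrow> config \<Rightarrow> (nat \<times> nat) list list \<Rightarrow> bool" where
  "witnessed d Z Q \<longleftrightarrow>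
     (\<forall>B \<in> set Q. (\<forall>a \<in> set B. \<forall>b \<in> set B. same_zeta d (Z a) (Z b)) \<and>
                  sorted_wrt (\<lambda>a b. pr_t d (Z a) < pr_t d (Z b)) B)"

definition weight :: "(nat \<times> nat) list list \<Rightarrow> nat list" where
  "weight Q = map length Q"

definition Pk :: "nat \<Rightarrow> (nat \<Rightarrow> nat) \<Rightarrow> nat list set" where
  "Pk r k = {l. (\<forall>x \<in> set l. 0 < x) \<and> sum_list l = total_size r k}"

definition padded :: "nat list \<Rightarrow> nat \<Rightarrow> nat" where
  "padded l n = (if n < length l then l ! n else 0)"

definition weight_le :: "nat list \<Rightarrow> nat list \<Rightarrow> bool" where
  "weight_le l m \<longleftrightarrow> padded l = padded m \<or>
     (\<exists>n. (\<forall>n' < n. padded l n' = padded m n') \<and> padded l n < padded m n)"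

definition QZ :: "nat \<Rightarrow> nat \<Rightarrow> (nat \<Rightarrow> nat) \<Rightarrow> config \<Rightarrow> (nat \<times> nat) list list" where
  "QZ d r k Z = (THE Q. ray_partition r k Q \<and> witnessed d Z Q \<and>
      (\<forall>Q'. ray_partition r k Q' \<and> witnessed d Z Q' \<longrightarrow> weight_le (weight Q') (weight Q)))"

text \<open>F_lambda inside the one-point compactification (None = infinity).\<close>
definition F_lambda :: "nat \<Rightarrow> nat \<Rightarrow> nat \<Rightarrow> (nat \<Rightarrow> nat) \<Rightarrow> (nat \<Rightarrow> nat \<Rightarrow> nat) \<Rightarrow> nat list
    \<Rightarrow> config option set" where
  "F_lambda p q r k \<sigma> lam = insert None
     (Some ` {Z \<in> Vspace p q r k \<sigma>. weight_le lam (weight (QZ (p + q) r k Z))})"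

end

theory Submission
  imports Defs "HOL-Library.Fun_Lexorder"
begin

(* For Z in V the points z_i^j are pairwise distinct, so points on a common line
   pr_zeta = const have pairwise different heights pr_t. Then the maximal witnessed ray
   partition is obtained greedily: its first block must start at the lexicographically least
   position a0 and lies on the upward ray through z(a0), so the longest possible first block is
   that whole ray, and one recurses on the remaining positions; every other witnessed ray
   partition has strictly smaller weight. For such Z, witnessing a ray partition is equivalent
   to the closed condition obtained by weakening the strict height inequalities.
   Hence {Z in V. omega(Q^Z) >= lambda} is the trace on V of a finite union of closed sets,
   one for each ray partition of weight >= lambda, and a closed subset of V together with
   infinity is closed in the one-point compactification. *)

lemma lexless_iff_lex_prod: "lexless a b \<longleftrightarrow> (a, b) \<in> less_than <*lex*> less_than"
  by (cases a; cases b) (auto simp: lexless_def)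

lemma lexless_asym: "lexless a b \<Longrightarrow> \<not> lexless b a"
  by (auto simp: lexless_def)

lemma lexless_trans: "lexless a b \<Longrightarrow> lexless b c \<Longrightarrow> lexless a c"
  by (auto simp: lexless_def)

lemma lexless_linear: "a \<noteq> b \<Longrightarrow> lexless a b \<or> lexless b a"
  by (cases a; cases b) (auto simp: lexless_def)

lemma ex_lexless_least:
  assumes "A \<noteq> {}"
  obtains a0 where "a0 \<in> A" "\<And>a. a \<in> A \<Longrightarrow> a \<noteq> a0 \<Longrightarrow> lexless a0 a"
proof -
  obtain a0 where "a0 \<in> A" and "\<And>a. lexless a a0 \<Longrightarrow> a \<notin> A"
    using wfE_min[OF wf_lex_prod[OF wf_less_than wf_less_than]] assms
    unfolding lexless_iff_lex_prod by blast
  then show thesis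
    using that lexless_linear by blast
qed

lemma padded_Cons_0 [simp]: "padded (x # l) 0 = x"
  and padded_Cons_Suc [simp]: "padded (x # l) (Suc n) = padded l n"
  by (simp_all add: padded_def)

lemma weight_Cons [simp]: "weight (B # Q) = length B # weight Q"
  by (simp add: weight_def)

lemma weight_le_iff_less_fun: "weight_le l m \<longleftrightarrow> less_fun (padded l) (padded m) \<or> padded l = padded m"
  by (auto simp: weight_le_def less_fun_def)

lemma weight_le_trans: "weight_le l m \<Longrightarrow> weight_le m n \<Longrightarrow> weight_le l n"
  unfolding weight_le_iff_less_fun by (metis less_fun_trans)

lemma less_fun_nat_iff:
  fixes f g :: "nat \<Rightarrow> 'b::linorder"
  shows "less_fun f g \<longleftrightarrow> f 0 < g 0 \<or> f 0 = g 0 \<and> less_fun (\<lambda>n. f (Suc n)) (\<lambda>n. g (Suc n))"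
    (is "_ \<longleftrightarrow> ?rhs")
proof
  assume "less_fun f g"
  then obtain k where k: "f k < g k" "\<forall>k' < k. f k' = g k'"
    unfolding less_fun_def by blast
  show ?rhs
  proof (cases k)
    case (Suc k')
    then have "less_fun (\<lambda>n. f (Suc n)) (\<lambda>n. g (Suc n))"
      using k unfolding less_fun_def by auto
    then show ?thesis using k(2) Suc by auto
  qed (use k in simp)
next
  assume ?rhs
  then consider "f 0 < g 0"
    | k where "f 0 = g 0" "f (Suc k) < g (Suc k)" "\<forall>k' < k. f (Suc k') = g (Suc k')"
    unfolding less_fun_def by blast
  then show "less_fun f g"
  proof cases
    case (2 k)
    then show ?thesis
      unfolding less_fun_def by (intro exI[of _ "Suc k"]) (auto simp: less_Suc_eq_0_disj)
  qed (auto simp: less_fun_def)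
qed

lemma less_fun_padded_Cons:
  "less_fun (padded (x # l)) (padded (y # m)) \<longleftrightarrow> x < y \<or> x = y \<and> less_fun (padded l) (padded m)"
  by (subst less_fun_nat_iff) simp

lemma sorted_wrt_key_distinct:
  fixes t :: "'a \<Rightarrow> 't::linorder"
  shows "sorted_wrt (\<lambda>a b. t a < t b) B \<Longrightarrow> distinct B"
  by (simp add: sorted_wrt_map[symmetric] strict_sorted_iff distinct_map)

lemma sorted_wrt_key_unique:
  fixes t :: "'a \<Rightarrow> 't::linorder"
  assumes "sorted_wrt (\<lambda>a b. t a < t b) B" "sorted_wrt (\<lambda>a b. t a < t b) B'" "set B = set B'"
  shows "B = B'"
proof -
  have strict: "sorted_wrt (<) (map t B)" "sorted_wrt (<) (map t B')"
    using assms(1,2) by (simp_all add: sorted_wrt_map)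
  then have "map t B = map t B'"
    using assms(3) by (intro strict_sorted_equal) auto
  moreover have "inj_on t (set B \<union> set B')"
    using strict assms(3) by (simp add: strict_sorted_iff distinct_map)
  ultimately show ?thesis
    by (simp add: inj_on_map_eq_map)
qed

lemma sorted_wrt_key_subset:
  fixes t :: "'a \<Rightarrow> 't::linorder"
  assumes "sorted_wrt (\<lambda>a b. t a < t b) B" "sorted_wrt (\<lambda>a b. t a < t b) B'" "set B \<subseteq> set B'"
  shows "B = B' \<or> length B < length B'"
proof -
  have "length B = card (set B)" "length B' = card (set B')"
    using assms(1,2) by (simp_all add: sorted_wrt_key_distinct distinct_card)
  moreover have "set B = set B' \<Longrightarrow> B = B'"
    using assms(1,2) by (rule sorted_wrt_key_unique)
  ultimately show ?thesis
    using assms(3) by (metis List.finite_set card_subset_eq card_mono le_neq_implies_less)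
qed

lemma ex_sorted_wrt_key:
  fixes t :: "'a \<Rightarrow> 't::linorder"
  assumes "finite M" "inj_on t M"
  obtains B where "set B = M" "sorted_wrt (\<lambda>a b. t a < t b) B"
proof -
  interpret folding_insort_key "(\<le>)" "(<)" M t
    by unfold_locales (rule assms(2))
  obtain B where "sorted_wrt (<) (map t B)" "set B = M"
    using finite_set_strict_sorted[OF order_refl assms(1)] by metis
  then show thesis
    by (intro that) (simp_all add: sorted_wrt_map)
qed

lemma sorted_wrt_key_less_iff_le:
  fixes t :: "'a \<Rightarrow> 't::linorder"
  assumes "distinct B" "inj_on t (set B)"
  shows "sorted_wrt (\<lambda>a b. t a < t b) B \<longleftrightarrow> sorted_wrt (\<lambda>a b. t a \<le> t b) B"
  using assms by (simp add: sorted_wrt_map[symmetric] strict_sorted_iff distinct_map)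

section \<open>Ray partitions of a finite set of positions\<close>

definition ray_partition_on :: "(nat \<times> nat) set \<Rightarrow> (nat \<times> nat) list list \<Rightarrow> bool" where
  "ray_partition_on A Q \<longleftrightarrow>
     distinct (concat Q) \<and> set (concat Q) = A \<and>
     (\<forall>B \<in> set Q. B \<noteq> []) \<and>
     (\<forall>B \<in> set Q. \<forall>a \<in> set B. a \<noteq> hd B \<longrightarrow> lexless (hd B) a) \<and>
     sorted_wrt lexless (map hd Q)"

lemma ray_partition_eq_ray_partition_on: "ray_partition r k = ray_partition_on (table r k)"
  by (simp add: fun_eq_iff ray_partition_def ray_partition_on_def)

lemma ray_partition_on_Nil [simp]: "ray_partition_on A [] \<longleftrightarrow> A = {}"
  by (auto simp: ray_partition_on_def)

lemma ray_partition_on_empty: "ray_partition_on {} Q \<longleftrightarrow> Q = []"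
  by (cases Q) (auto simp: ray_partition_on_def)

lemma ray_partition_on_Cons:
  "ray_partition_on A (B # R) \<longleftrightarrow>
     B \<noteq> [] \<and> distinct B \<and> set B \<subseteq> A \<and> (\<forall>a \<in> set B. a \<noteq> hd B \<longrightarrow> lexless (hd B) a) \<and>
     (\<forall>B' \<in> set R. lexless (hd B) (hd B')) \<and> ray_partition_on (A - set B) R"
  by (auto simp: ray_partition_on_def)

lemma ray_partition_on_hd_mem: "ray_partition_on A Q \<Longrightarrow> B \<in> set Q \<Longrightarrow> hd B \<in> A"
  by (auto simp: ray_partition_on_def)

lemma ray_partition_on_hd_least:
  assumes "ray_partition_on A (B # R)" "a \<in> A" "a \<noteq> hd B"
  shows "lexless (hd B) a"
proof -
  obtain B' where B': "B' \<in> set (B # R)" "a \<in> set B'"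
    using assms(1,2) by (auto simp: ray_partition_on_def)
  show ?thesis
  proof (cases "B' = B")
    case False
    then have "lexless (hd B) (hd B')" "a = hd B' \<or> lexless (hd B') a"
      using assms(1) B' by (auto simp: ray_partition_on_def)
    then show ?thesis using lexless_trans by blast
  qed (use assms B' in \<open>auto simp: ray_partition_on_def\<close>)
qed

lemma finite_distinct_lists:
  assumes "finite A"
  shows "finite {xs. set xs \<subseteq> A \<and> distinct xs}"
proof (rule finite_subset)
  show "{xs. set xs \<subseteq> A \<and> distinct xs} \<subseteq> {xs. set xs \<subseteq> A \<and> length xs \<le> card A}"
    using assms by (auto simp: distinct_card[symmetric] card_mono)
  show "finite {xs. set xs \<subseteq> A \<and> length xs \<le> card A}"
    using assms by (rule finite_lists_length_le)
qed

lemma finite_ray_partitions: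
  assumes "finite A"
  shows "finite {Q. ray_partition_on A Q}"
proof -
  let ?blocks = "{B. set B \<subseteq> A \<and> distinct B}"
  have "Q \<in> {Q. set Q \<subseteq> ?blocks \<and> distinct Q}" if Q: "ray_partition_on A Q" for Q
  proof -
    have "distinct (removeAll [] Q)" "\<forall>B \<in> set Q. distinct B" "[] \<notin> set Q"
      using Q by (auto simp: ray_partition_on_def distinct_concat_iff)
    then show ?thesis
      using Q by (auto simp: ray_partition_on_def)
  qed
  then have "{Q. ray_partition_on A Q} \<subseteq> {Q. set Q \<subseteq> ?blocks \<and> distinct Q}"
    by blast
  then show ?thesis
    using finite_distinct_lists[OF finite_distinct_lists[OF assms]] by (rule finite_subset)
qed

section \<open>The greedy maximal witnessed ray partition\<close>

definition witnessed_by :: "('a \<Rightarrow> 'b) \<Rightarrow> ('a \<Rightarrow> 't::ord) \<Rightarrow> 'a list list \<Rightarrow> bool" where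
  "witnessed_by z t Q \<longleftrightarrow>
     (\<forall>B \<in> set Q. (\<forall>a \<in> set B. \<forall>b \<in> set B. z a = z b) \<and> sorted_wrt (\<lambda>a b. t a < t b) B)"

lemma witnessed_by_Cons:
  "witnessed_by z t (B # R) \<longleftrightarrow>
     (\<forall>a \<in> set B. \<forall>b \<in> set B. z a = z b) \<and> sorted_wrt (\<lambda>a b. t a < t b) B \<and> witnessed_by z t R"
  by (auto simp: witnessed_by_def)

definition weakly_witnessed_by :: "('a \<Rightarrow> 'b) \<Rightarrow> ('a \<Rightarrow> 't::ord) \<Rightarrow> 'a list list \<Rightarrow> bool" where
  "weakly_witnessed_by z t Q \<longleftrightarrow>
     (\<forall>B \<in> set Q. (\<forall>a \<in> set B. \<forall>b \<in> set B. z a = z b) \<and> sorted_wrt (\<lambda>a b. t a \<le> t b) B)"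

lemma witnessed_by_iff_weakly_witnessed_by:
  fixes t :: "'a \<Rightarrow> 't::linorder"
  assumes "\<forall>B \<in> set Q. distinct B" "inj_on (\<lambda>a. (z a, t a)) (set (concat Q))"
  shows "witnessed_by z t Q \<longleftrightarrow> weakly_witnessed_by z t Q"
proof -
  have "sorted_wrt (\<lambda>a b. t a < t b) B \<longleftrightarrow> sorted_wrt (\<lambda>a b. t a \<le> t b) B"
    if "B \<in> set Q" "\<forall>a \<in> set B. \<forall>b \<in> set B. z a = z b" for B
  proof (rule sorted_wrt_key_less_iff_le)
    show "distinct B" using assms(1) that(1) by blast
    show "inj_on t (set B)"
    proof (rule inj_onI)
      fix a b assume "a \<in> set B" "b \<in> set B" "t a = t b"
      moreover from this have "z a = z b" using that(2) by blast
      ultimately show "a = b"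
        using assms(2) that(1) by (auto dest: inj_onD)
    qed
  qed
  then show ?thesis
    unfolding witnessed_by_def weakly_witnessed_by_def by blast
qed

definition upper_ray :: "('a \<Rightarrow> 'b) \<Rightarrow> ('a \<Rightarrow> 't::ord) \<Rightarrow> 'a set \<Rightarrow> 'a \<Rightarrow> 'a set" where
  "upper_ray z t A a0 = {a \<in> A. z a = z a0 \<and> t a0 \<le> t a}"

lemma upper_ray_enumeration:
  fixes t :: "nat \<times> nat \<Rightarrow> 't::linorder"
  assumes "finite A" "inj_on (\<lambda>a. (z a, t a)) A" "a0 \<in> A"
  obtains B0 where "set B0 = upper_ray z t A a0" "sorted_wrt (\<lambda>a b. t a < t b) B0" "hd B0 = a0"
proof -
  let ?M = "upper_ray z t A a0"
  have "finite ?M"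
    using assms(1) by (simp add: upper_ray_def)
  moreover have "inj_on t ?M"
    using assms(2) by (auto simp: upper_ray_def inj_on_def)
  ultimately obtain B0 where B0: "set B0 = ?M" "sorted_wrt (\<lambda>a b. t a < t b) B0"
    by (rule ex_sorted_wrt_key)
  have "a0 \<in> set B0"
    using B0(1) assms(3) by (simp add: upper_ray_def)
  then obtain b B1 where B0_Cons: "B0 = b # B1"
    by (cases B0) auto
  have "b = a0"
  proof (rule ccontr)
    assume "b \<noteq> a0"
    then have "t b < t a0"
      using B0(2) \<open>a0 \<in> set B0\<close> B0_Cons by auto
    moreover have "t a0 \<le> t b"
      using B0(1) B0_Cons by (auto simp: upper_ray_def)
    ultimately show False by simp
  qed
  then show thesis
    using B0 B0_Cons by (intro that[of B0]) simp_all
qed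

lemma first_block_in_upper_ray:
  fixes t :: "nat \<times> nat \<Rightarrow> 't::order"
  assumes "ray_partition_on A (B # R)" "witnessed_by z t (B # R)"
  shows "set B \<subseteq> upper_ray z t A (hd B)"
proof
  fix b assume b: "b \<in> set B"
  have "B \<noteq> []"
    using assms(1) by (simp add: ray_partition_on_Cons)
  then obtain a0 B0 where B: "B = a0 # B0"
    by (meson neq_Nil_conv)
  have "b \<in> A"
    using assms(1) b by (auto simp: ray_partition_on_Cons)
  moreover have "z b = z a0"
  proof -
    have "\<forall>x \<in> set B. \<forall>y \<in> set B. z x = z y"
      using assms(2) unfolding witnessed_by_Cons by blast
    then show ?thesis
      using b B by (meson list.set_intros(1))
  qed
  moreover have "t a0 \<le> t b"
  proof -
    have "sorted_wrt (\<lambda>a b. t a < t b) (a0 # B0)"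
      using assms(2) B unfolding witnessed_by_Cons by blast
    then show ?thesis
      using b B by (auto intro: less_imp_le)
  qed
  ultimately show "b \<in> upper_ray z t A (hd B)"
    using B by (simp add: upper_ray_def)
qed

lemma witnessed_ray_partition_first_block:
  fixes t :: "nat \<times> nat \<Rightarrow> 't::linorder"
  assumes "ray_partition_on A (B # R)" "witnessed_by z t (B # R)"
    and "a0 \<in> A" "\<And>a. a \<in> A \<Longrightarrow> a \<noteq> a0 \<Longrightarrow> lexless a0 a"
    and "set B0 = upper_ray z t A a0" "sorted_wrt (\<lambda>a b. t a < t b) B0"
  shows "length B < length B0 \<or> B = B0 \<and> ray_partition_on (A - set B0) R \<and> witnessed_by z t R"
proof -
  have "hd B = a0"
    using ray_partition_on_hd_least[OF assms(1) assms(3)] assms(4) lexless_asym assms(1)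
    by (metis hd_in_set ray_partition_on_Cons subset_iff)
  then have "set B \<subseteq> set B0"
    using first_block_in_upper_ray[OF assms(1,2)] assms(5) by simp
  moreover have "sorted_wrt (\<lambda>a b. t a < t b) B"
    using assms(2) unfolding witnessed_by_Cons by blast
  ultimately have "B = B0 \<or> length B < length B0"
    using sorted_wrt_key_subset assms(6) by blast
  moreover have "ray_partition_on (A - set B) R" "witnessed_by z t R"
    using assms(1,2) unfolding ray_partition_on_Cons witnessed_by_Cons by blast+
  ultimately show ?thesis by blast
qed

lemma maximal_witnessed_ray_partition:
  fixes z :: "nat \<times> nat \<Rightarrow> 'b" and t :: "nat \<times> nat \<Rightarrow> 't::linorder"
  assumes "finite A" "inj_on (\<lambda>a. (z a, t a)) A"
  obtains G where "ray_partition_on A G" "witnessed_by z t G"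
    "\<And>Q. ray_partition_on A Q \<Longrightarrow> witnessed_by z t Q \<Longrightarrow> Q \<noteq> G \<Longrightarrow>
       less_fun (padded (weight Q)) (padded (weight G))"
  using assms
proof (induction "card A" arbitrary: A thesis rule: less_induct)
  case less
  show ?case
  proof (cases "A = {}")
    case True
    then show ?thesis
      using less.prems(1)[of "[]"] by (simp add: ray_partition_on_empty witnessed_by_def)
  next
    case False
    then obtain a0 where a0: "a0 \<in> A" "\<And>a. a \<in> A \<Longrightarrow> a \<noteq> a0 \<Longrightarrow> lexless a0 a"
      using ex_lexless_least by blast
    define M where "M = upper_ray z t A a0"
    obtain B0 where B0: "set B0 = M" "sorted_wrt (\<lambda>a b. t a < t b) B0" "hd B0 = a0"
      using upper_ray_enumeration[OF less.prems(2,3) a0(1)] unfolding M_def .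
    have "M \<subseteq> A" "a0 \<in> M"
      using a0(1) by (auto simp: M_def upper_ray_def)
    then have "card (A - M) < card A" "inj_on (\<lambda>a. (z a, t a)) (A - M)"
      using less.prems(2,3) a0(1) by (auto intro: psubset_card_mono inj_on_subset)
    then obtain G' where G': "ray_partition_on (A - M) G'" "witnessed_by z t G'"
      "\<And>R. ray_partition_on (A - M) R \<Longrightarrow> witnessed_by z t R \<Longrightarrow> R \<noteq> G' \<Longrightarrow>
         less_fun (padded (weight R)) (padded (weight G'))"
      using less.hyps less.prems(2) by blast
    show ?thesis
    proof (rule less.prems(1))
      have "\<forall>B' \<in> set G'. lexless a0 (hd B')"
        using ray_partition_on_hd_mem[OF G'(1)] a0(2) \<open>a0 \<in> M\<close> by blast
      then show "ray_partition_on A (B0 # G')"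
        unfolding ray_partition_on_Cons
        using B0 \<open>M \<subseteq> A\<close> \<open>a0 \<in> M\<close> G'(1) a0(2) sorted_wrt_key_distinct[OF B0(2)] by auto
      show "witnessed_by z t (B0 # G')"
        using B0 G'(2) unfolding witnessed_by_Cons by (auto simp: M_def upper_ray_def)
      fix Q assume Q: "ray_partition_on A Q" "witnessed_by z t Q" "Q \<noteq> B0 # G'"
      then obtain B R where Q_Cons: "Q = B # R"
        using False by (cases Q) auto
      have "length B < length B0 \<or> B = B0 \<and> ray_partition_on (A - M) R \<and> witnessed_by z t R"
        using witnessed_ray_partition_first_block[OF Q(1,2)[unfolded Q_Cons] a0 B0(1,2)[unfolded M_def]]
        by (simp add: B0(1))
      then show "less_fun (padded (weight Q)) (padded (weight (B0 # G')))"
        using G'(3) Q(3) by (auto simp: Q_Cons less_fun_padded_Cons)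
    qed
  qed
qed

definition pr_zeta :: "nat \<Rightarrow> point \<Rightarrow> point" where
  "pr_zeta d x = restrict x {..<d - 1}"

lemma same_zeta_iff_pr_zeta: "same_zeta d x y \<longleftrightarrow> pr_zeta d x = pr_zeta d y"
  by (auto simp: same_zeta_def pr_zeta_def fun_eq_iff)

lemma pr_zeta_eq_iff: "pr_zeta d x = pr_zeta d y \<longleftrightarrow> (\<forall>c < d - 1. x c = y c)"
  by (simp add: same_zeta_iff_pr_zeta[symmetric] same_zeta_def)

lemma witnessed_eq_witnessed_by:
  "witnessed d Z = witnessed_by (\<lambda>a. pr_zeta d (Z a)) (\<lambda>a. pr_t d (Z a))"
  by (simp add: fun_eq_iff witnessed_def witnessed_by_def same_zeta_iff_pr_zeta)

lemma finite_table: "finite (table r k)"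
proof -
  have "table r k = Sigma {1..r} (\<lambda>i. {1..k i})"
    by (auto simp: table_def)
  then show ?thesis by simp
qed

lemma Vspace_subset_Vtilde: "Vspace p q r k \<sigma> \<subseteq> Vtilde p q r k"
  unfolding Vspace_def Vtilde_comp_def by auto

lemma Vtilde_inj_on_pr_zeta_pr_t:
  assumes "Z \<in> Vtilde p q r k" "1 \<le> q"
  shows "inj_on (\<lambda>a. (pr_zeta (p + q) (Z a), pr_t (p + q) (Z a))) (table r k)"
proof (rule inj_onI)
  fix a b assume ab: "a \<in> table r k" "b \<in> table r k"
    and eq: "(pr_zeta (p + q) (Z a), pr_t (p + q) (Z a)) = (pr_zeta (p + q) (Z b), pr_t (p + q) (Z b))"
  have "Z a c = Z b c" for c
  proof -
    consider "c < p + q - 1" | "c = p + q - 1" | "p + q \<le> c"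
      using assms(2) by linarith
    then show ?thesis
    proof cases
      case 1
      then show ?thesis using eq by (auto simp: pr_zeta_def fun_eq_iff dest: spec[of _ c])
    next
      case 2
      then show ?thesis using eq by (simp add: pr_t_def)
    next
      case 3
      have "Z \<in> ambient_set (p + q) r k"
        using assms(1) by (simp add: Vtilde_def)
      then have "\<And>a. Z a c = 0"
        using 3 unfolding ambient_set_def by blast
      then show ?thesis by simp
    qed
  qed
  then have "Z a = Z b" by blast
  then show "a = b"
    using assms(1) ab unfolding Vtilde_def by blast
qed

lemma QZ_greatest:
  assumes "inj_on (\<lambda>a. (pr_zeta d (Z a), pr_t d (Z a))) (table r k)"
  shows "ray_partition r k (QZ d r k Z)" "witnessed d Z (QZ d r k Z)"
    and "\<And>Q. ray_partition r k Q \<Longrightarrow> witnessed d Z Q \<Longrightarrow> weight_le (weight Q) (weight (QZ d r k Z))"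
proof -
  obtain G where G: "ray_partition r k G" "witnessed d Z G"
    "\<And>Q. ray_partition r k Q \<Longrightarrow> witnessed d Z Q \<Longrightarrow> Q \<noteq> G \<Longrightarrow>
       less_fun (padded (weight Q)) (padded (weight G))"
    using maximal_witnessed_ray_partition[OF finite_table assms]
    unfolding ray_partition_eq_ray_partition_on witnessed_eq_witnessed_by by blast
  then have G_greatest: "weight_le (weight Q) (weight G)"
    if "ray_partition r k Q" "witnessed d Z Q" for Q
    using that by (cases "Q = G") (auto simp: weight_le_iff_less_fun)
  have "QZ d r k Z = G"
    unfolding QZ_def
  proof (rule the_equality)
    fix Q assume Q: "ray_partition r k Q \<and> witnessed d Z Q \<and>
      (\<forall>Q'. ray_partition r k Q' \<and> witnessed d Z Q' \<longrightarrow> weight_le (weight Q') (weight Q))"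
    show "Q = G"
    proof (rule ccontr)
      assume "Q \<noteq> G"
      then have "less_fun (padded (weight Q)) (padded (weight G))"
        using G(3) Q by blast
      moreover have "weight_le (weight G) (weight Q)"
        using G(1,2) Q by blast
      ultimately show False
        unfolding weight_le_iff_less_fun by (metis less_fun_asym less_fun_irrefl)
    qed
  qed (use G G_greatest in blast)
  then show "ray_partition r k (QZ d r k Z)" "witnessed d Z (QZ d r k Z)"
    and "\<And>Q. ray_partition r k Q \<Longrightarrow> witnessed d Z Q \<Longrightarrow> weight_le (weight Q) (weight (QZ d r k Z))"
    using G G_greatest by simp_all
qed

lemma weight_QZ_ge_iff:
  assumes "inj_on (\<lambda>a. (pr_zeta d (Z a), pr_t d (Z a))) (table r k)"
  shows "weight_le lam (weight (QZ d r k Z)) \<longleftrightarrow>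
    (\<exists>Q. ray_partition r k Q \<and> weight_le lam (weight Q) \<and>
         weakly_witnessed_by (\<lambda>a. pr_zeta d (Z a)) (\<lambda>a. pr_t d (Z a)) Q)"
proof -
  have witnessed_iff: "witnessed d Z Q \<longleftrightarrow> weakly_witnessed_by (\<lambda>a. pr_zeta d (Z a)) (\<lambda>a. pr_t d (Z a)) Q"
    if "ray_partition r k Q" for Q
    unfolding witnessed_eq_witnessed_by
  proof (rule witnessed_by_iff_weakly_witnessed_by)
    show "\<forall>B \<in> set Q. distinct B"
      using that by (auto simp: ray_partition_def distinct_concat_iff)
    show "inj_on (\<lambda>a. (pr_zeta d (Z a), pr_t d (Z a))) (set (concat Q))"
      using that assms by (simp add: ray_partition_def)
  qed
  show ?thesis
    using QZ_greatest[OF assms] witnessed_iff weight_le_trans by metis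
qed

section \<open>Closedness\<close>

lemma topspace_ambient_top [simp]: "topspace ambient_top = UNIV"
  by (simp add: ambient_top_def PiE_UNIV_domain)

lemma closedin_ambient_INT:
  "(\<And>i. i \<in> I \<Longrightarrow> closedin ambient_top (S i)) \<Longrightarrow> closedin ambient_top (\<Inter>i\<in>I. S i)"
  by (cases "I = {}") (use closedin_topspace[of ambient_top] in auto)

lemma continuous_map_ambient_coordinate: "continuous_map ambient_top euclideanreal (\<lambda>Z. Z a c)"
proof -
  have "continuous_map ambient_top (powertop_real UNIV) (\<lambda>Z. Z a)"
    unfolding ambient_top_def by (rule continuous_map_product_projection) simp
  moreover have "continuous_map (powertop_real UNIV) euclideanreal (\<lambda>x. x c)"
    by (rule continuous_map_product_projection) simp
  ultimately show ?thesis
    using continuous_map_compose by (fastforce simp: o_def)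
qed

lemma closedin_ambient_coordinate_le: "closedin ambient_top {Z. Z a c \<le> Z b c'}"
proof -
  have "{Z :: config. Z a c \<le> Z b c'} = {Z \<in> topspace ambient_top. Z b c' - Z a c \<in> {0..}}"
    by auto
  then show ?thesis
    by (simp only:) (intro closedin_continuous_map_preimage[where Y = euclideanreal]
        continuous_map_diff continuous_map_ambient_coordinate; simp)
qed

lemma closedin_ambient_coordinate_eq: "closedin ambient_top {Z. Z a c = Z b c'}"
proof -
  have "{Z :: config. Z a c = Z b c'} = {Z. Z a c \<le> Z b c'} \<inter> {Z. Z b c' \<le> Z a c}"
    by auto
  then show ?thesis
    by (simp only:) (intro closedin_Int closedin_ambient_coordinate_le)
qed

lemma closedin_weakly_witnessed_by:
  "closedin ambient_top {Z. weakly_witnessed_by (\<lambda>a. pr_zeta d (Z a)) (\<lambda>a. pr_t d (Z a)) Q}"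
proof -
  have "{Z. weakly_witnessed_by (\<lambda>a. pr_zeta d (Z a)) (\<lambda>a. pr_t d (Z a)) Q} =
    (\<Inter>B \<in> set Q.
      (\<Inter>a \<in> set B. \<Inter>b \<in> set B. \<Inter>c \<in> {c. c < d - 1}. {Z. Z a c = Z b c}) \<inter>
      (\<Inter>i. \<Inter>j \<in> {j. i < j \<and> j < length B}. {Z. Z (B ! i) (d - 1) \<le> Z (B ! j) (d - 1)}))"
    unfolding weakly_witnessed_by_def pr_zeta_eq_iff pr_t_def sorted_wrt_iff_nth_less by blast
  then show ?thesis
    by (simp only:) (intro closedin_ambient_INT closedin_Int closedin_ambient_coordinate_le
        closedin_ambient_coordinate_eq)
qed

lemma closedin_Alexandroff_insert_None:
  assumes "closedin X S"
  shows "closedin (Alexandroff_compactification X) (insert None (Some ` S))"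
  unfolding closedin_Alexandroff_compactification
proof (intro disjI2 exI conjI)
  show "openin X (topspace X - S)"
    using assms by (simp add: closedin_def)
  show "insert None (Some ` S) = topspace (Alexandroff_compactification X) - Some ` (topspace X - S)"
    using closedin_subset[OF assms] by auto
qed

theorem lemma3p12:
  fixes p q r :: nat and k :: "nat \<Rightarrow> nat" and \<sigma> :: "nat \<Rightarrow> nat \<Rightarrow> nat" and lam :: "nat list"
  assumes "1 \<le> q"
    and "\<forall>i. 1 \<le> i \<and> i \<le> r \<longrightarrow> 1 \<le> k i"
    and "q = 1 \<longrightarrow> (\<forall>i. 1 \<le> i \<and> i \<le> r \<longrightarrow> \<sigma> i permutes {1..k i})"
    and "lam \<in> Pk r k"
  shows "closedin
           (Alexandroff_compactification (subtopology ambient_top (Vspace p q r k \<sigma>)))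
           (F_lambda p q r k \<sigma> lam)"
proof -
  define d where "d = p + q"
  define V where "V = Vspace p q r k \<sigma>"
  define P where "P = {Q. ray_partition r k Q \<and> weight_le lam (weight Q)}"
  define C where "C Q = {Z :: config. weakly_witnessed_by (\<lambda>a. pr_zeta d (Z a)) (\<lambda>a. pr_t d (Z a)) Q}" for Q
  have "weight_le lam (weight (QZ d r k Z)) \<longleftrightarrow> (\<exists>Q \<in> P. Z \<in> C Q)" if "Z \<in> V" for Z
  proof -
    have "Z \<in> Vtilde p q r k"
      using that Vspace_subset_Vtilde unfolding V_def by blast
    then show ?thesis
      unfolding d_def P_def C_def using weight_QZ_ge_iff[OF Vtilde_inj_on_pr_zeta_pr_t[OF _ assms(1)]]
      by simp
  qed
  then have "{Z \<in> V. weight_le lam (weight (QZ d r k Z))} = (\<Union>Q \<in> P. C Q) \<inter> V"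
    by blast
  moreover have "closedin ambient_top (\<Union>Q \<in> P. C Q)"
    using finite_ray_partitions[OF finite_table]
    by (intro closedin_Union) (auto simp: P_def C_def ray_partition_eq_ray_partition_on
        closedin_weakly_witnessed_by intro: finite_subset)
  ultimately have "closedin (subtopology ambient_top V) {Z \<in> V. weight_le lam (weight (QZ d r k Z))}"
    unfolding closedin_subtopology by blast
  then show ?thesis
    unfolding F_lambda_def d_def V_def by (rule closedin_Alexandroff_insert_None)
qed

end
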